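(* Let $(S,C,T,\mathbf{p},\mathbf{c})$ be a DFEP instance, let $\rho>0$, let $D_E$ be a decision tree for it with expected testing cost $E=cost_E(D_E)$ and let $D_W$ be a decision tree for it with worst testing cost $W=cost_W(D_W)$. Let $D$ be the tree returned by \texttt{CombineTrees}$(D_E,D_W,\rho)$. Then $cost_E(D)\le (1+1/\rho)E$ and $cost_W(D)\le (1+\rho)W$.
   Context: A DFEP instance $(S,C,T,\mathbf{p},\mathbf{c})$: $S$ a finite set of objects partitioned into classes $C$; $T$ a complete set of tests $t:S\to\{1,\dots,\ell\}$ (any two distinct objects are distinguished by some test); $\mathbf p$ a probability distribution on $S$; each test $t$ has a cost $c(t)\in\mathbb{Q}^+$. A decision tree is a leaf labeled with a class if all objects in the current set belong to that class; otherwise its root is labeled with a test $t$ and its children are decision trees for the nonempty sets $\{s: t(s)=i\}$ within the current set. $cost(D,s)$ is the sum of the costs of the tests on the root-to-leaf path of object $s$; $cost_W(D)=\max_{s} cost(D,s)$ and $cost_E(D)=\sum_s cost(D,s)p(s)$. Procedure \texttt{CombineTrees}$(D_E,D_W,\rho)$: (1) call a node $v$ of $D_E$ replaceable if the total cost of the path from the root of $D_E$ to $v$ (including $v$) is at least $\rho W$ while the cost of the path from the root of $D_E$ to the parent of $v$ is smaller than $\rho W$; let $R$ be the set of replaceable nodes. (2) For each $v\in R$, let $S(v)$ be the set of objects associated with leaves of the subtree of $D_E$ rooted at $v$, let $D_W^{S(v)}$ be the decision tree for $S(v)$ obtained from $D_W$ by disassociating every object of $S\setminus S(v)$ from it, and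 replace the subtree of $D_E$ rooted at $v$ by $D_W^{S(v)}$. (3) Return the resulting tree $D$. *)

theory Defs
  imports Complex_Main
begin

datatype ('t,'c) dtree = Leaf 'c | Node 't "nat \<Rightarrow> ('t,'c) dtree option"

inductive dtree_for :: "'t set \<Rightarrow> ('t \<Rightarrow> 'a \<Rightarrow> nat) \<Rightarrow> ('a \<Rightarrow> 'c) \<Rightarrow> 'a set \<Rightarrow> ('t,'c) dtree \<Rightarrow> bool"
  for T ev cls where
  leaf: "(\<forall>s\<in>X. cls s = k) \<Longrightarrow> dtree_for T ev cls X (Leaf k)"
| node: "t \<in> T \<Longrightarrow> \<not> (\<exists>k. \<forall>s\<in>X. cls s = k)
   \<Longrightarrow> (\<forall>i. ({s\<in>X. ev t s = i} = {}) = (ch i = None))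
   \<Longrightarrow> (\<forall>i d. ch i = Some d \<longrightarrow> dtree_for T ev cls {s\<in>X. ev t s = i} d)
   \<Longrightarrow> dtree_for T ev cls X (Node t ch)"

primrec tcost :: "('t \<Rightarrow> real) \<Rightarrow> ('t \<Rightarrow> 'a \<Rightarrow> nat) \<Rightarrow> ('t,'c) dtree \<Rightarrow> 'a \<Rightarrow> real" where
  "tcost c ev (Leaf k) s = 0"
| "tcost c ev (Node t ch) s = c t + (case map_option (\<lambda>d. tcost c ev d s) (ch (ev t s)) of None \<Rightarrow> 0 | Some r \<Rightarrow> r)"

primrec restrict_tree :: "('t \<Rightarrow> 'a \<Rightarrow> nat) \<Rightarrow> ('t,'c) dtree \<Rightarrow> 'a set \<Rightarrow> ('t,'c) dtree" where
  "restrict_tree ev (Leaf k) X = Leaf k"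
| "restrict_tree ev (Node t ch) X = Node t (\<lambda>i. if {s\<in>X. ev t s = i} = {} then None
      else map_option (\<lambda>d. restrict_tree ev d {s\<in>X. ev t s = i}) (ch i))"


definition cost_W :: "('t \<Rightarrow> real) \<Rightarrow> ('t \<Rightarrow> 'a \<Rightarrow> nat) \<Rightarrow> 'a set \<Rightarrow> ('t,'c) dtree \<Rightarrow> real" where
  "cost_W c ev S D = Max ((\<lambda>s. tcost c ev D s) ` S)"

definition cost_E :: "('t \<Rightarrow> real) \<Rightarrow> ('t \<Rightarrow> 'a \<Rightarrow> nat) \<Rightarrow> ('a \<Rightarrow> real) \<Rightarrow> 'a set \<Rightarrow> ('t,'c) dtree \<Rightarrow> real" where
  "cost_E c ev p S D = (\<Sum>s\<in>S. tcost c ev D s * p s)"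

text \<open>Walk down the subtree of D_E rooted at the current node v.  X is the set of objects
  associated with the leaves of that subtree and acc is the cost of the path from the root
  to the parent of v (0 at the root).\<close>
primrec combine_aux :: "('t \<Rightarrow> real) \<Rightarrow> ('t \<Rightarrow> 'a \<Rightarrow> nat) \<Rightarrow> real \<Rightarrow> ('t,'c) dtree
    \<Rightarrow> ('t,'c) dtree \<Rightarrow> 'a set \<Rightarrow> real \<Rightarrow> ('t,'c) dtree" where
  "combine_aux c ev thr DW (Leaf k) X acc =
     (if thr \<le> acc \<and> acc < thr then restrict_tree ev DW X else Leaf k)"
| "combine_aux c ev thr DW (Node t ch) X acc =
     (if thr \<le> acc + c t \<and> acc < thr then restrict_tree ev DW X
      else Node t (\<lambda>i. map_option (\<lambda>d. combine_aux c ev thr DW d {s\<in>X. ev t s = i} (acc + c t)) (ch i)))"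

definition combine_trees :: "('t \<Rightarrow> real) \<Rightarrow> ('t \<Rightarrow> 'a \<Rightarrow> nat) \<Rightarrow> 'a set
    \<Rightarrow> ('t,'c) dtree \<Rightarrow> ('t,'c) dtree \<Rightarrow> real \<Rightarrow> ('t,'c) dtree" where
  "combine_trees c ev S DE DW \<rho> = combine_aux c ev (\<rho> * cost_W c ev S DW) DW DE S 0"

end

theory Submission
  imports Defs
begin

text \<open>Fix an object s.  If its path in D_E meets no replaceable node, its cost is unchanged.
  Otherwise let a \<ge> \<rho>W be the cost of its path down to and including the replaceable node v.
  The part above v costs less than \<rho>W and D_W adds at most W, so the new cost is below
  (1 + \<rho>)W; it is also at most a + W \<le> (1 + 1/\<rho>) a.  Averaging over p bounds the
  expected cost.\<close>

lemma tcost_restrict_tree: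
  "s \<in> X \<Longrightarrow> tcost c ev (restrict_tree ev D X) s = tcost c ev D s"
proof (induction D arbitrary: X)
  case (Node t ch)
  show ?case
  proof (cases "ch (ev t s)")
    case (Some d)
    then have "Some d \<in> range ch" by (metis rangeI)
    with Some Node show ?thesis by auto
  qed (use Node.prems in simp)
qed simp

lemma tcost_nonneg:
  assumes "dtree_for T ev cls X D" and "\<forall>t\<in>T. 0 \<le> c t"
  shows "0 \<le> tcost c ev D s"
  using assms(1)
proof (induction rule: dtree_for.induct)
  case (node t X ch)
  then show ?case
    using assms(2) by (cases "ch (ev t s)") auto
qed simp

lemma tcost_Node_ge:
  assumes "dtree_for T ev cls X (Node t ch)" and "\<forall>t\<in>T. 0 \<le> c t"
  shows "c t \<le> tcost c ev (Node t ch) s"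
  using assms(1)
proof cases
  case node
  show ?thesis
  proof (cases "ch (ev t s)")
    case (Some d)
    with node have "dtree_for T ev cls {s'\<in>X. ev t s' = ev t s} d" by blast
    then show ?thesis using Some tcost_nonneg[OF _ assms(2)] by simp
  qed simp
qed

lemma dtree_for_Leaf_iff:
  assumes "dtree_for T ev cls X D"
  shows "(\<exists>k. D = Leaf k) \<longleftrightarrow> (\<exists>k. \<forall>s\<in>X. cls s = k)"
  using assms by cases auto

lemma tcost_combine_aux_le_worst:
  assumes "s \<in> X" and "acc < thr" and "0 \<le> tcost c ev DW s"
  shows "acc + tcost c ev (combine_aux c ev thr DW D X acc) s \<le> thr + tcost c ev DW s"
  using assms(1,2)
proof (induction D arbitrary: X acc)
  case (Leaf k)
  then show ?case using assms(3) by simp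
next
  case (Node t ch)
  show ?case
  proof (cases "thr \<le> acc + c t")
    case True
    then show ?thesis using Node.prems by (simp add: tcost_restrict_tree)
  next
    case False
    show ?thesis
    proof (cases "ch (ev t s)")
      case None
      then show ?thesis using False assms(3) by simp
    next
      case (Some d)
      have "Some d \<in> range ch" using Some by (metis rangeI)
      then have "acc + c t + tcost c ev (combine_aux c ev thr DW d {s'\<in>X. ev t s' = ev t s} (acc + c t)) s
          \<le> thr + tcost c ev DW s"
        using Node.IH False Node.prems by simp
      then show ?thesis using Some False by (simp add: add.assoc)
    qed
  qed
qed

lemma tcost_combine_aux_le_expected:
  assumes D: "dtree_for T ev cls X D" and c_nonneg: "\<forall>t\<in>T. 0 \<le> c t"
    and \<rho>: "0 < \<rho>" and DW: "\<rho> * tcost c ev DW s \<le> thr"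
  shows "s \<in> X \<Longrightarrow> 0 \<le> acc \<Longrightarrow>
    acc + tcost c ev (combine_aux c ev thr DW D X acc) s \<le> (1 + 1/\<rho>) * (acc + tcost c ev D s)"
  using D
proof (induction arbitrary: acc rule: dtree_for.induct)
  case (leaf X k)
  then show ?case using \<rho> by (simp add: algebra_simps)
next
  case (node t X ch)
  have ct: "0 \<le> c t" using node.hyps(1) c_nonneg by blast
  show ?case
  proof (cases "thr \<le> acc + c t \<and> acc < thr")
    case True
    have "dtree_for T ev cls X (Node t ch)"
      using node.hyps node.IH by (blast intro: dtree_for.node)
    then have Node_ge: "c t \<le> tcost c ev (Node t ch) s"
      using c_nonneg by (rule tcost_Node_ge)
    have "acc + tcost c ev DW s \<le> acc + (acc + c t) / \<rho>"
      using DW True \<rho> by (simp add: pos_le_divide_eq mult.commute)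
    also have "\<dots> \<le> (1 + 1/\<rho>) * (acc + c t)"
      using ct \<rho> by (simp add: field_simps)
    also have "\<dots> \<le> (1 + 1/\<rho>) * (acc + tcost c ev (Node t ch) s)"
      using Node_ge \<rho> by (intro mult_left_mono) auto
    finally show ?thesis
      using True node.prems by (simp add: tcost_restrict_tree)
  next
    case False
    then have descend: "combine_aux c ev thr DW (Node t ch) X acc = Node t (\<lambda>i.
        map_option (\<lambda>d. combine_aux c ev thr DW d {s\<in>X. ev t s = i} (acc + c t)) (ch i))"
      unfolding combine_aux.simps by (rule if_not_P)
    show ?thesis
    proof (cases "ch (ev t s)")
      case None
      then show ?thesis unfolding descend using ct node.prems \<rho> by (simp add: algebra_simps)
    next
      case (Some d)
      then have "acc + c t + tcost c ev (combine_aux c ev thr DW d {s'\<in>X. ev t s' = ev t s} (acc + c t)) s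
          \<le> (1 + 1/\<rho>) * (acc + c t + tcost c ev d s)"
        using node.IH ct node.prems by simp
      then show ?thesis unfolding descend using Some by (simp add: add.assoc)
    qed
  qed
qed

lemma tcost_le_cost_W: "finite S \<Longrightarrow> s \<in> S \<Longrightarrow> tcost c ev D s \<le> cost_W c ev S D"
  unfolding cost_W_def by (rule Max_ge) auto

lemma cost_W_le:
  "finite S \<Longrightarrow> S \<noteq> {} \<Longrightarrow> \<forall>s\<in>S. tcost c ev D s \<le> b \<Longrightarrow> cost_W c ev S D \<le> b"
  unfolding cost_W_def by (subst Max_le_iff) auto

lemma cost_E_le_scaled:
  assumes "\<forall>s\<in>S. 0 \<le> p s" and "\<forall>s\<in>S. tcost c ev D s \<le> a * tcost c ev D' s"
  shows "cost_E c ev p S D \<le> a * cost_E c ev p S D'"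
  unfolding cost_E_def sum_distrib_left
proof (rule sum_mono)
  fix s assume "s \<in> S"
  then have "tcost c ev D s * p s \<le> (a * tcost c ev D' s) * p s"
    using assms by (intro mult_right_mono) auto
  then show "tcost c ev D s * p s \<le> a * (tcost c ev D' s * p s)"
    by (simp add: mult.assoc)
qed

lemma tcost_combine_trees_le_expected:
  assumes "finite S" and "s \<in> S" and "dtree_for T ev cls S DE" and "\<forall>t\<in>T. 0 \<le> c t"
    and "0 < \<rho>"
  shows "tcost c ev (combine_trees c ev S DE DW \<rho>) s \<le> (1 + 1/\<rho>) * tcost c ev DE s"
proof -
  have "\<rho> * tcost c ev DW s \<le> \<rho> * cost_W c ev S DW"
    using assms by (simp add: tcost_le_cost_W)
  from tcost_combine_aux_le_expected[OF assms(3,4,5) this assms(2) order_refl]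
  show ?thesis unfolding combine_trees_def by simp
qed

lemma tcost_combine_trees_le_worst:
  assumes "finite S" and s: "s \<in> S" and DE: "dtree_for T ev cls S DE"
    and DW: "dtree_for T ev cls S DW" and c_pos: "\<forall>t\<in>T. 0 < c t" and \<rho>: "0 < \<rho>"
  shows "tcost c ev (combine_trees c ev S DE DW \<rho>) s \<le> (1 + \<rho>) * cost_W c ev S DW"
proof -
  define W where "W = cost_W c ev S DW"
  have le_W: "tcost c ev DW s \<le> W"
    unfolding W_def using assms by (simp add: tcost_le_cost_W)
  have c_nonneg: "\<forall>t\<in>T. 0 \<le> c t"
    using c_pos by (simp add: less_imp_le)
  have DW_nonneg: "0 \<le> tcost c ev DW s"
    using DW c_nonneg by (rule tcost_nonneg)
  show ?thesis
  proof (cases DE)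
    case (Leaf k)
    then show ?thesis using le_W DW_nonneg \<rho> unfolding W_def combine_trees_def by simp
  next
    case (Node t ch)
    \<comment> \<open>W > 0 is essential: for W = 0 no node is replaceable and D is D_E itself.\<close>
    then have "\<nexists>k. \<forall>s\<in>S. cls s = k"
      using dtree_for_Leaf_iff[OF DE] by simp
    with DW obtain t' ch' where DW_Node: "DW = Node t' ch'" and "t' \<in> T"
      by cases auto
    then have "0 < c t'" using c_pos by blast
    also have "c t' \<le> tcost c ev DW s"
      using tcost_Node_ge[OF DW[unfolded DW_Node] c_nonneg] DW_Node by simp
    finally have "0 < \<rho> * W" using le_W \<rho> by simp
    from s this DW_nonneg
    have "0 + tcost c ev (combine_aux c ev (\<rho> * W) DW DE S 0) s \<le> \<rho> * W + tcost c ev DW s"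
      by (rule tcost_combine_aux_le_worst)
    then show ?thesis using le_W unfolding W_def combine_trees_def by (simp add: algebra_simps)
  qed
qed

theorem theorem2:
  fixes S :: "'a set" and cls :: "'a \<Rightarrow> 'c" and T :: "'t set"
    and ev :: "'t \<Rightarrow> 'a \<Rightarrow> nat" and l :: nat
    and p :: "'a \<Rightarrow> real" and c :: "'t \<Rightarrow> real"
    and \<rho> :: real and DE DW :: "('t,'c) dtree"
  assumes fin_S: "finite S"
    and fin_T: "finite T"
    and test_range: "\<forall>t\<in>T. \<forall>s\<in>S. ev t s \<in> {1..l}"
    and complete: "\<forall>s1\<in>S. \<forall>s2\<in>S. s1 \<noteq> s2 \<longrightarrow> (\<exists>t\<in>T. ev t s1 \<noteq> ev t s2)"
    and p_nonneg: "\<forall>s\<in>S. 0 \<le> p s"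
    and p_sum: "(\<Sum>s\<in>S. p s) = 1"
    and c_rat: "\<forall>t\<in>T. c t \<in> \<rat> \<and> 0 < c t"
    and rho_pos: "0 < \<rho>"
    and DE: "dtree_for T ev cls S DE"
    and DW: "dtree_for T ev cls S DW"
  shows "cost_E c ev p S (combine_trees c ev S DE DW \<rho>) \<le> (1 + 1/\<rho>) * cost_E c ev p S DE
       \<and> cost_W c ev S (combine_trees c ev S DE DW \<rho>) \<le> (1 + \<rho>) * cost_W c ev S DW"
proof
  have c_pos: "\<forall>t\<in>T. 0 < c t" using c_rat by blast
  then have c_nonneg: "\<forall>t\<in>T. 0 \<le> c t" by (simp add: less_imp_le)
  have "S \<noteq> {}" using p_sum by auto
  show "cost_E c ev p S (combine_trees c ev S DE DW \<rho>) \<le> (1 + 1/\<rho>) * cost_E c ev p S DE"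
    by (rule cost_E_le_scaled[OF p_nonneg])
      (use tcost_combine_trees_le_expected[OF fin_S _ DE c_nonneg rho_pos] in blast)
  show "cost_W c ev S (combine_trees c ev S DE DW \<rho>) \<le> (1 + \<rho>) * cost_W c ev S DW"
    by (rule cost_W_le[OF fin_S \<open>S \<noteq> {}\<close>])
      (use tcost_combine_trees_le_worst[OF fin_S _ DE DW c_pos rho_pos] in blast)
qed

end
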